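(* In the two-dimensional perturbed elephant random walk with stops, assume $\epsilon+r\neq1$, and let $C=\frac{r}{(\epsilon+r)\Gamma(1-\epsilon-r)}$. Then for all $t\ge1$, $\mathbb{E}[|\boldsymbol\sigma_t|^2]=C\frac{\Gamma(t-\epsilon-r)}{\Gamma(t)}+\frac{\epsilon}{\epsilon+r}$. If moreover $\gamma\in(-\tfrac12,1)$, $\gamma\neq\tfrac12$ and $2\gamma\neq1-\epsilon-r$, then for all $t\ge1$ $$\mathbb{E}[|\boldsymbol X_t|^2]=\frac{\epsilon}{(1-2\gamma)(\epsilon+r)}\,t+\frac{C}{1-\epsilon-r-2\gamma}\,\frac{\Gamma(t+1-\epsilon-r)}{\Gamma(t)}+D\,\frac{\Gamma(t+2\gamma)}{\Gamma(t)},$$ where $D=-\dfrac{1}{\Gamma(2\gamma)}\Big[\dfrac{\epsilon}{(\epsilon+r)(1-2\gamma)}+\dfrac{r}{(\epsilon+r)(1-\epsilon-r-2\gamma)}\Big]$ (with $1/\Gamma(0)=0$ when $\gamma=0$).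
   Context: Two-dimensional perturbed elephant random walk with stops: let $\mathbf i,\mathbf j$ be the standard basis of $\mathbb R^2$, $I$ the identity matrix and $A=\begin{bmatrix}0&-1\\1&0\end{bmatrix}$ (rotation by $\pi/2$). Fix $p,q,p',q',r\in(0,1)$ with $p+q+p'+q'+r=1$, $\epsilon\in(0,1)$, and $s_1,\dots,s_4\in(0,1)$ with $s_1+s_2+s_3+s_4=1$; set $\gamma=p-q$, $\gamma'=p'-q'$. Steps $\boldsymbol\sigma_t\in\{\mathbf i,\mathbf j,-\mathbf i,-\mathbf j,\mathbf 0\}$, $\boldsymbol X_0=\mathbf 0$, $\boldsymbol X_t=\boldsymbol\sigma_1+\dots+\boldsymbol\sigma_t$. The first step equals $\mathbf i,\mathbf j,-\mathbf i,-\mathbf j$ with probabilities $s_1,s_2,s_3,s_4$. For $t\ge1$, conditionally on $\boldsymbol\sigma_1,\dots,\boldsymbol\sigma_t$, choose $k\in\{1,\dots,t\}$ uniformly at random. If $|\boldsymbol\sigma_k|=1$, then $\boldsymbol\sigma_{t+1}$ equals $\boldsymbol\sigma_k$, $-\boldsymbol\sigma_k$, $A\boldsymbol\sigma_k$, $A^{-1}\boldsymbol\sigma_k$, $\mathbf 0$ with probabilities $p,q,p',q',r$ respectively. If $\boldsymbol\sigma_k=\mathbf 0$, then $\boldsymbol\sigma_{t+1}$ equals each of $\mathbf i,\mathbf j,-\mathbf i,-\mathbf j$ with probability $\epsilon/4$ and $\mathbf 0$ with probability $1-\epsilon$. *)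

theory Defs
  imports "HOL-Probability.Probability"
begin

(* Vectors in R^2 are modelled as real \<times> real; i = (1,0), j = (0,1). *)
definition rotA :: "real \<times> real \<Rightarrow> real \<times> real" where
  "rotA v = (- snd v, fst v)"

definition rotAinv :: "real \<times> real \<Rightarrow> real \<times> real" where
  "rotAinv v = (snd v, - fst v)"

definition first_step :: "real \<Rightarrow> real \<Rightarrow> real \<Rightarrow> real \<Rightarrow> (real \<times> real) pmf" where
  "first_step s1 s2 s3 s4 =
     pmf_of_list [((1,0), s1), ((0,1), s2), ((-1,0), s3), ((0,-1), s4)]"

(* conditional law of sigma_{t+1} given the remembered step sigma_k = v *)
definition next_step ::
  "real \<Rightarrow> real \<Rightarrow> real \<Rightarrow> real \<Rightarrow> real \<Rightarrow> real \<Rightarrow> real \<times> real \<Rightarrow> (real \<times> real) pmf" where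
  "next_step p q p' q' r \<epsilon> v =
     (if norm v = 1
      then pmf_of_list [(v, p), (- v, q), (rotA v, p'), (rotAinv v, q'), (0, r)]
      else pmf_of_list [((1,0), \<epsilon>/4), ((0,1), \<epsilon>/4), ((-1,0), \<epsilon>/4), ((0,-1), \<epsilon>/4),
                        (0, 1 - \<epsilon>)])"

(* walk_path ... t : joint law of the list [sigma_1, ..., sigma_t] *)
fun walk_path ::
  "real \<Rightarrow> real \<Rightarrow> real \<Rightarrow> real \<Rightarrow> real \<Rightarrow> real \<Rightarrow>
   real \<Rightarrow> real \<Rightarrow> real \<Rightarrow> real \<Rightarrow> nat \<Rightarrow> (real \<times> real) list pmf" where
  "walk_path p q p' q' r \<epsilon> s1 s2 s3 s4 0 = return_pmf []"
| "walk_path p q p' q' r \<epsilon> s1 s2 s3 s4 (Suc 0) =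
     map_pmf (\<lambda>s. [s]) (first_step s1 s2 s3 s4)"
| "walk_path p q p' q' r \<epsilon> s1 s2 s3 s4 (Suc (Suc t)) =
     bind_pmf (walk_path p q p' q' r \<epsilon> s1 s2 s3 s4 (Suc t)) (\<lambda>xs.
       map_pmf (\<lambda>s. xs @ [s])
         (bind_pmf (pmf_of_set {..<length xs}) (\<lambda>k. next_step p q p' q' r \<epsilon> (xs ! k))))"

end

theory Submission
  imports Defs
begin

(* The remembered step is uniform over the past, so given the first t steps the next step
   has E |s|^2 = eps + (1 - eps - r) S_t / t with S_t the sum of the squared step lengths, and
   E |X_t + s|^2 = (1 + 2 gamma / t) |X_t|^2 + eps + (1 - eps - r) S_t / t: averaging the
   remembered steps turns the cross terms into gamma <X_t, X_t> + gamma' <X_t, A X_t>, and the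
   rotation term vanishes. Taking expectations yields first-order linear recurrences in t.
   Since h(t) = Gamma (t + c) / Gamma t satisfies h (t + 1) = (1 + c / t) h t, the closed forms
   are checked against these recurrences by induction on t. *)

lemma expectation_pmf_of_list:
  fixes f :: "'a \<Rightarrow> real"
  assumes wf: "pmf_of_list_wf xs"
  shows "measure_pmf.expectation (pmf_of_list xs) f = (\<Sum>(x, w)\<leftarrow>xs. w * f x)"
proof -
  have "measure_pmf.expectation (pmf_of_list xs) f = (\<Sum>a\<in>set (map fst xs). f a * pmf (pmf_of_list xs) a)"
    using set_pmf_of_list[OF wf] by (intro integral_measure_pmf_real) auto
  also have "\<dots> = (\<Sum>a\<in>set (map fst xs). f a * sum_list (map snd (filter (\<lambda>z. fst z = a) xs)))"
    using wf by (simp add: pmf_pmf_of_list)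
  also have "\<dots> = (\<Sum>a\<in>set (map fst xs). \<Sum>i<length xs. if fst (xs ! i) = a then snd (xs ! i) * f a else 0)"
    by (intro sum.cong refl, subst sum_list_map_filter', subst sum_list_sum_nth)
       (auto simp: sum_distrib_left atLeast0LessThan intro!: sum.cong)
  also have "\<dots> = (\<Sum>i<length xs. snd (xs ! i) * f (fst (xs ! i)))"
    by (subst sum.swap) (simp add: sum.delta)
  also have "\<dots> = (\<Sum>(x, w)\<leftarrow>xs. w * f x)"
    by (simp add: sum_list_sum_nth atLeast0LessThan case_prod_beta)
  finally show ?thesis .
qed

lemma norm_add_power2: "(norm (x + y))\<^sup>2 = (norm x)\<^sup>2 + 2 * inner x y + (norm (y :: 'a :: real_inner))\<^sup>2"
  using dot_norm[of x y] by simp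

lemma norm_diff_power2: "(norm (x - y))\<^sup>2 = (norm x)\<^sup>2 - 2 * inner x y + (norm (y :: 'a :: real_inner))\<^sup>2"
  using norm_add_power2[of x "- y"] by simp

lemma rotA_add: "rotA (u + v) = rotA u + rotA v"
  by (simp add: rotA_def)

lemma rotA_zero [simp]: "rotA 0 = 0"
  by (simp add: rotA_def zero_prod_def)

lemma norm_rotA [simp]: "norm (rotA v) = norm v"
  by (cases v) (simp add: rotA_def norm_Pair)

lemma rotAinv_eq_uminus_rotA: "rotAinv v = - rotA v"
  by (simp add: rotA_def rotAinv_def)

lemma inner_rotA_self [simp]: "inner v (rotA v) = 0"
  by (cases v) (simp add: rotA_def)

lemma expectation_bind_pmf_finite:
  fixes h :: "'b \<Rightarrow> real"
  assumes "finite (set_pmf M)" "\<And>x. x \<in> set_pmf M \<Longrightarrow> finite (set_pmf (f x))"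
  shows "measure_pmf.expectation (M \<bind> f) h = measure_pmf.expectation M (\<lambda>x. measure_pmf.expectation (f x) h)"
  using assms
  by (subst pmf_expectation_bind[of "set_pmf M"], simp_all, subst integral_measure_pmf[of "set_pmf M"], simp_all)

lemma not_nonpos_Ints_gt_minus_one:
  fixes x :: real
  assumes "-1 < x" "x \<noteq> 0"
  shows "x \<notin> \<int>\<^sub>\<le>\<^sub>0"
proof
  assume "x \<in> \<int>\<^sub>\<le>\<^sub>0"
  then obtain n :: nat where "x = - real n" by (auto elim!: nonpos_Ints_cases')
  with assms show False by (cases n) auto
qed

lemma Gamma_ratio_Suc:
  fixes c :: real
  assumes "0 < n" "real n + c \<notin> \<int>\<^sub>\<le>\<^sub>0"
  shows "Gamma (real (Suc n) + c) / Gamma (real (Suc n)) = (1 + c / n) * (Gamma (real n + c) / Gamma n)"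
proof -
  have "real n \<notin> \<int>\<^sub>\<le>\<^sub>0" using assms(1) by (intro not_nonpos_Ints_gt_minus_one) auto
  then have "Gamma (real n + 1) = n * Gamma n" "Gamma n \<noteq> 0"
    by (simp_all add: Gamma_plus1 Gamma_nonzero)
  moreover have "Gamma (real n + c + 1) = (real n + c) * Gamma (real n + c)"
    using assms(2) by (rule Gamma_plus1)
  ultimately show ?thesis
    using assms(1) by (simp add: add.commute add.left_commute field_simps)
qed

(* Also valid at x = 0, where rGamma 0 = 0: the convention 1/Gamma(0) = 0 for D when gamma = 0. *)
lemma rGamma_mult_Gamma_plus1:
  fixes x :: real
  assumes "x + 1 \<notin> \<int>\<^sub>\<le>\<^sub>0"
  shows "rGamma x * Gamma (x + 1) = x"
  using assms rGamma_plus1[of x] by (simp add: rGamma_inverse_Gamma Gamma_nonzero field_simps flip: rGamma_plus1)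

definition step_values :: "(real \<times> real) set" where
  "step_values = {(1, 0), (0, 1), (-1, 0), (0, -1), 0}"

locale elephant_walk_with_stops =
  fixes p q p' q' r \<epsilon> s1 s2 s3 s4 :: real
  assumes nonneg: "0 \<le> p" "0 \<le> q" "0 \<le> p'" "0 \<le> q'" "0 \<le> r" "0 \<le> \<epsilon>" "\<epsilon> \<le> 1"
    "0 \<le> s1" "0 \<le> s2" "0 \<le> s3" "0 \<le> s4"
    and step_probs_sum: "p + q + p' + q' + r = 1"
    and first_probs_sum: "s1 + s2 + s3 + s4 = 1"
begin

abbreviation walk :: "nat \<Rightarrow> (real \<times> real) list pmf" where
  "walk \<equiv> walk_path p q p' q' r \<epsilon> s1 s2 s3 s4"

abbreviation step_law :: "real \<times> real \<Rightarrow> (real \<times> real) pmf" where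
  "step_law \<equiv> next_step p q p' q' r \<epsilon>"

lemma pmf_of_list_wf_first_step:
  "pmf_of_list_wf [((1 :: real, 0 :: real), s1), ((0, 1), s2), ((-1, 0), s3), ((0, -1), s4)]"
  using nonneg first_probs_sum by (auto simp: pmf_of_list_wf_def)

lemma pmf_of_list_wf_moving:
  "pmf_of_list_wf [(v, p), (- v, q), (rotA v, p'), (rotAinv v, q'), (0, r)]"
  using nonneg step_probs_sum by (auto simp: pmf_of_list_wf_def)

lemma pmf_of_list_wf_stopped:
  "pmf_of_list_wf [((1 :: real, 0 :: real), \<epsilon>/4), ((0, 1), \<epsilon>/4), ((-1, 0), \<epsilon>/4), ((0, -1), \<epsilon>/4), (0, 1 - \<epsilon>)]"
  using nonneg by (auto simp: pmf_of_list_wf_def)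

lemma finite_set_step_law: "finite (set_pmf (step_law v))"
  using finite_set_pmf_of_list[OF pmf_of_list_wf_moving] finite_set_pmf_of_list[OF pmf_of_list_wf_stopped]
  by (simp add: next_step_def)

lemma set_step_law: "v \<in> step_values \<Longrightarrow> set_pmf (step_law v) \<subseteq> step_values"
  using set_pmf_of_list[OF pmf_of_list_wf_moving, of v] set_pmf_of_list[OF pmf_of_list_wf_stopped]
  by (auto simp: next_step_def step_values_def rotA_def rotAinv_def zero_prod_def)

lemma walk_Suc:
  "0 < t \<Longrightarrow> walk (Suc t) = walk t \<bind> (\<lambda>xs. map_pmf (\<lambda>s. xs @ [s])
      (pmf_of_set {..<length xs} \<bind> (\<lambda>k. step_law (xs ! k))))"
  by (cases t) simp_all

lemma set_walk: "set_pmf (walk t) \<subseteq> {xs. set xs \<subseteq> step_values \<and> length xs = t}"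
proof (induction t)
  case (Suc t)
  show ?case
  proof (cases "t = 0")
    case True
    then show ?thesis
      using set_pmf_of_list[OF pmf_of_list_wf_first_step] by (auto simp: first_step_def step_values_def)
  next
    case False
    show ?thesis
    proof
      fix ys assume "ys \<in> set_pmf (walk (Suc t))"
      then obtain xs where xs: "xs \<in> set_pmf (walk t)" and "ys \<in> set_pmf (map_pmf (\<lambda>s. xs @ [s])
          (pmf_of_set {..<length xs} \<bind> (\<lambda>k. step_law (xs ! k))))"
        using False by (auto simp: walk_Suc)
      moreover have xs_walk: "set xs \<subseteq> step_values" "length xs = t"
        using Suc.IH xs by auto
      ultimately obtain k s where k: "k < length xs" and s: "s \<in> set_pmf (step_law (xs ! k))"
        and ys: "ys = xs @ [s]"
        using False by (auto simp: set_bind_pmf lessThan_empty_iff)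
      have "xs ! k \<in> step_values"
        using xs_walk k nth_mem by blast
      with s set_step_law have "s \<in> step_values" by blast
      with xs_walk show "ys \<in> {xs. set xs \<subseteq> step_values \<and> length xs = Suc t}"
        by (simp add: ys)
    qed
  qed
qed simp

lemma finite_set_walk: "finite (set_pmf (walk t))"
  using set_walk by (rule finite_subset) (simp add: finite_lists_length_eq step_values_def)

lemma integrable_walk [simp]: "integrable (measure_pmf (walk t)) (f :: _ \<Rightarrow> real)"
  by (rule integrable_measure_pmf_finite[OF finite_set_walk])

lemma expectation_walk_Suc:
  assumes "0 < t"
  shows "measure_pmf.expectation (walk (Suc t)) g =
    measure_pmf.expectation (walk t)
      (\<lambda>xs. (\<Sum>v\<leftarrow>xs. measure_pmf.expectation (step_law v) (\<lambda>s. g (xs @ [s]))) / real t)"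
proof -
  have length: "length xs = t" if "xs \<in> set_pmf (walk t)" for xs
    using set_walk that by blast
  show ?thesis unfolding walk_Suc[OF assms]
  proof (subst expectation_bind_pmf_finite[OF finite_set_walk], goal_cases finite eq)
    case (finite xs)
    then show ?case
      using length[OF finite] assms finite_set_step_law by (auto simp: set_bind_pmf lessThan_empty_iff)
  next
    case eq
    show ?case
    proof (intro integral_cong_AE AE_pmfI)
      fix xs assume "xs \<in> set_pmf (walk t)"
      then show "measure_pmf.expectation (map_pmf (\<lambda>s. xs @ [s])
          (pmf_of_set {..<length xs} \<bind> (\<lambda>k. step_law (xs ! k)))) g =
        (\<Sum>v\<leftarrow>xs. measure_pmf.expectation (step_law v) (\<lambda>s. g (xs @ [s]))) / real t"
        using length assms finite_set_step_law
        by (auto simp: pmf_expectation_bind_pmf_of_set lessThan_empty_iff sum_list_sum_nth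
            atLeast0LessThan divide_inverse_commute sum_distrib_left)
    qed simp_all
  qed
qed

lemma norm_step_values: "v \<in> step_values \<Longrightarrow> norm v = 1 \<or> v = 0"
  by (auto simp: step_values_def zero_prod_def)

lemma expectation_step_law_norm_add_power2:
  assumes "v \<in> step_values"
  shows "measure_pmf.expectation (step_law v) (\<lambda>s. (norm (x + s))\<^sup>2) =
    (norm x)\<^sup>2 + \<epsilon> + 2 * (p - q) * inner x v + 2 * (p' - q') * inner x (rotA v)
      + (1 - r - \<epsilon>) * (norm v)\<^sup>2"
proof (cases "v = 0")
  case True
  then show ?thesis
    using nonneg by (cases x) (simp add: next_step_def expectation_pmf_of_list[OF pmf_of_list_wf_stopped]
        norm_add_power2 norm_Pair algebra_simps)
next
  case False
  have r: "r = 1 - p - q - p' - q'" using step_probs_sum by simp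
  from False assms have "norm v = 1" using norm_step_values by blast
  then show ?thesis
    by (simp add: next_step_def expectation_pmf_of_list[OF pmf_of_list_wf_moving])
      (simp add: r norm_add_power2 norm_diff_power2 rotAinv_eq_uminus_rotA algebra_simps inner_commute)
qed

lemma integrable_step_law [simp]: "integrable (measure_pmf (step_law v)) (f :: _ \<Rightarrow> real)"
  by (rule integrable_measure_pmf_finite[OF finite_set_step_law])

lemma sum_list_expectation_step_law:
  assumes "set xs \<subseteq> step_values"
  shows "(\<Sum>v\<leftarrow>xs. measure_pmf.expectation (step_law v) (\<lambda>s. c + (norm (x + s))\<^sup>2)) =
    real (length xs) * (c + (norm x)\<^sup>2 + \<epsilon>) + 2 * (p - q) * inner x (sum_list xs)
      + 2 * (p' - q') * inner x (rotA (sum_list xs)) + (1 - r - \<epsilon>) * (\<Sum>v\<leftarrow>xs. (norm v)\<^sup>2)"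
  using assms
proof (induction xs)
  case (Cons v xs)
  then have "measure_pmf.expectation (step_law v) (\<lambda>s. c + (norm (x + s))\<^sup>2) =
    c + (norm x)\<^sup>2 + \<epsilon> + 2 * (p - q) * inner x v + 2 * (p' - q') * inner x (rotA v)
      + (1 - r - \<epsilon>) * (norm v)\<^sup>2"
    by (simp add: expectation_step_law_norm_add_power2)
  with Cons show ?case
    by (simp add: inner_add_right rotA_add algebra_simps)
qed simp

lemma expectation_walk_Suc_norm_add_power2:
  assumes "0 < t" and g: "\<And>xs s. length xs = t \<Longrightarrow> g (xs @ [s]) = h xs + (norm (y xs + s))\<^sup>2"
  shows "measure_pmf.expectation (walk (Suc t)) g =
    measure_pmf.expectation (walk t) (\<lambda>xs. h xs + (norm (y xs))\<^sup>2 + \<epsilon>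
      + (2 * (p - q) * inner (y xs) (sum_list xs) + 2 * (p' - q') * inner (y xs) (rotA (sum_list xs))
         + (1 - r - \<epsilon>) * (\<Sum>v\<leftarrow>xs. (norm v)\<^sup>2)) / real t)"
  unfolding expectation_walk_Suc[OF \<open>0 < t\<close>]
proof (intro integral_cong_AE AE_pmfI)
  fix xs assume "xs \<in> set_pmf (walk t)"
  with set_walk have xs: "set xs \<subseteq> step_values" "length xs = t" by blast+
  then show "(\<Sum>v\<leftarrow>xs. measure_pmf.expectation (step_law v) (\<lambda>s. g (xs @ [s]))) / real t =
    h xs + (norm (y xs))\<^sup>2 + \<epsilon> + (2 * (p - q) * inner (y xs) (sum_list xs)
      + 2 * (p' - q') * inner (y xs) (rotA (sum_list xs)) + (1 - r - \<epsilon>) * (\<Sum>v\<leftarrow>xs. (norm v)\<^sup>2)) / real t"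
    using \<open>0 < t\<close> by (simp only: g xs(2) sum_list_expectation_step_law[OF xs(1)]) (simp add: field_simps)
qed simp_all

definition second_moment_step :: "nat \<Rightarrow> real" where
  "second_moment_step t = measure_pmf.expectation (walk t) (\<lambda>xs. (norm (xs ! (t - 1)))\<^sup>2)"

definition second_moment_steps_sum :: "nat \<Rightarrow> real" where
  "second_moment_steps_sum t = measure_pmf.expectation (walk t) (\<lambda>xs. \<Sum>v\<leftarrow>xs. (norm v)\<^sup>2)"

definition second_moment_position :: "nat \<Rightarrow> real" where
  "second_moment_position t = measure_pmf.expectation (walk t) (\<lambda>xs. (norm (sum_list xs))\<^sup>2)"

lemma expectation_first_step_norm_power2:
  "measure_pmf.expectation (first_step s1 s2 s3 s4) (\<lambda>s. (norm s)\<^sup>2) = 1"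
  using first_probs_sum
  by (simp add: first_step_def expectation_pmf_of_list[OF pmf_of_list_wf_first_step] norm_Pair)

lemma second_moments_1:
  "second_moment_step 1 = 1" "second_moment_steps_sum 1 = 1" "second_moment_position 1 = 1"
  by (simp_all add: second_moment_step_def second_moment_steps_sum_def second_moment_position_def
      expectation_first_step_norm_power2)

lemma second_moment_steps_sum_Suc:
  "0 < t \<Longrightarrow> second_moment_steps_sum (Suc t) =
    (1 + (1 - \<epsilon> - r) / t) * second_moment_steps_sum t + \<epsilon>"
  unfolding second_moment_steps_sum_def
  by (subst expectation_walk_Suc_norm_add_power2[where h = "\<lambda>xs. \<Sum>v\<leftarrow>xs. (norm v)\<^sup>2" and y = "\<lambda>_. 0"])
    (simp_all, simp add: field_simps)

lemma second_moment_step_Suc: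
  "0 < t \<Longrightarrow> second_moment_step (Suc t) = \<epsilon> + (1 - \<epsilon> - r) * second_moment_steps_sum t / t"
  unfolding second_moment_step_def second_moment_steps_sum_def
  by (subst expectation_walk_Suc_norm_add_power2[where h = "\<lambda>_. 0" and y = "\<lambda>_. 0"])
    (simp_all add: nth_append)

lemma second_moment_position_Suc:
  "0 < t \<Longrightarrow> second_moment_position (Suc t) =
    (1 + 2 * (p - q) / t) * second_moment_position t + (1 - \<epsilon> - r) * second_moment_steps_sum t / t + \<epsilon>"
  unfolding second_moment_position_def second_moment_steps_sum_def
  by (subst expectation_walk_Suc_norm_add_power2[where h = "\<lambda>_. 0" and y = sum_list])
    (simp_all add: dot_square_norm, simp add: field_simps)

definition const_C :: real where
  "const_C = r / ((\<epsilon> + r) * Gamma (1 - \<epsilon> - r))"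

definition const_D :: real where
  "const_D = - rGamma (2 * (p - q)) *
    (\<epsilon> / ((\<epsilon> + r) * (1 - 2 * (p - q))) + r / ((\<epsilon> + r) * (1 - \<epsilon> - r - 2 * (p - q))))"

(* eps + r < 2 keeps 1 - eps - r away from the pole of Gamma at -1. *)
context
  assumes stop_rate: "0 < \<epsilon> + r" "\<epsilon> + r < 2" "\<epsilon> + r \<noteq> 1"
begin

lemma stop_rate_nonzero: "\<epsilon> + r \<noteq> 0" "1 - \<epsilon> - r \<noteq> 0"
  using stop_rate by auto

lemma const_C_mult_Gamma: "const_C * Gamma (1 - \<epsilon> - r) = r / (\<epsilon> + r)"
proof -
  have "1 - \<epsilon> - r \<notin> \<int>\<^sub>\<le>\<^sub>0"
    using stop_rate by (intro not_nonpos_Ints_gt_minus_one) auto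
  then show ?thesis by (simp add: const_C_def Gamma_nonzero)
qed

lemma Gamma_two_minus_stop_rate: "Gamma (2 - \<epsilon> - r) = (1 - \<epsilon> - r) * Gamma (1 - \<epsilon> - r)"
proof -
  have "2 - \<epsilon> - r = 1 - \<epsilon> - r + 1" by simp
  also have "Gamma \<dots> = (1 - \<epsilon> - r) * Gamma (1 - \<epsilon> - r)"
    using stop_rate by (intro Gamma_plus1 not_nonpos_Ints_gt_minus_one) auto
  finally show ?thesis .
qed

lemma stop_fraction_eq: "\<epsilon> / (\<epsilon> + r) * (1 - \<epsilon> - r) + \<epsilon> = \<epsilon> / (\<epsilon> + r)"
  using stop_rate_nonzero by (simp add: field_simps)

lemma Gamma_stop_ratio_Suc:
  assumes "0 < n"
  shows "Gamma (real (Suc n) + 1 - \<epsilon> - r) / Gamma (real (Suc n))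
    = (1 + (1 - \<epsilon> - r) / n) * (Gamma (real n + 1 - \<epsilon> - r) / Gamma n)"
proof -
  have "real n + (1 - \<epsilon> - r) \<notin> \<int>\<^sub>\<le>\<^sub>0"
    using assms stop_rate by (intro not_nonpos_Ints_gt_minus_one) auto
  from Gamma_ratio_Suc[OF assms this] show ?thesis
    by (simp add: add_diff_eq)
qed

lemma second_moment_steps_sum_eq:
  "0 < t \<Longrightarrow> second_moment_steps_sum t =
    const_C / (1 - \<epsilon> - r) * (Gamma (real t + 1 - \<epsilon> - r) / Gamma (real t)) + \<epsilon> / (\<epsilon> + r) * real t"
proof (induction t rule: nat_induct_non_zero)
  case 1
  have "const_C / (1 - \<epsilon> - r) * (Gamma (real 1 + 1 - \<epsilon> - r) / Gamma (real 1)) + \<epsilon> / (\<epsilon> + r) * real 1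
      = const_C * Gamma (1 - \<epsilon> - r) + \<epsilon> / (\<epsilon> + r)"
    using stop_rate_nonzero by (simp add: Gamma_two_minus_stop_rate)
  also have "\<dots> = 1"
    using stop_rate by (simp add: const_C_mult_Gamma add_divide_distrib[symmetric])
  finally show ?case
    using second_moments_1 by simp
next
  case (Suc n)
  define G where "G = Gamma (real n + 1 - \<epsilon> - r) / Gamma n"
  note ratio = Gamma_stop_ratio_Suc[OF Suc.hyps, folded G_def]
  define c K e where "c = 1 - \<epsilon> - r" and "K = const_C / (1 - \<epsilon> - r)" and "e = \<epsilon> / (\<epsilon> + r)"
  have e: "e * c + \<epsilon> = e"
    unfolding c_def e_def by (rule stop_fraction_eq)
  have "second_moment_steps_sum (Suc n) = (1 + c / n) * (K * G + e * n) + \<epsilon>"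
    using Suc by (simp add: second_moment_steps_sum_Suc G_def c_def K_def e_def)
  also have "\<dots> = K * ((1 + c / n) * G) + e * n + (e * c + \<epsilon>)"
    using Suc.hyps by (simp add: field_simps)
  also have "\<dots> = K * ((1 + c / n) * G) + e * real (Suc n)"
    unfolding e by (simp add: algebra_simps)
  finally show ?case unfolding c_def ratio[symmetric] K_def e_def .
qed

lemma second_moment_step_eq:
  assumes "0 < t"
  shows "second_moment_step t = const_C * Gamma (real t - \<epsilon> - r) / Gamma (real t) + \<epsilon> / (\<epsilon> + r)"
proof (cases "t = 1")
  case True
  then show ?thesis
    using second_moments_1 stop_rate_nonzero
    by (simp add: const_C_mult_Gamma add_divide_distrib[symmetric])
next
  case False
  with assms obtain n where t: "t = Suc n" and n: "0 < n"
    by (metis One_nat_def gr0_implies_Suc neq0_conv)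
  define c G e where "c = 1 - \<epsilon> - r" and "G = Gamma (real n + 1 - \<epsilon> - r)" and "e = \<epsilon> / (\<epsilon> + r)"
  have "c \<noteq> 0" using stop_rate_nonzero by (simp add: c_def)
  have n_Gamma: "real n \<notin> \<int>\<^sub>\<le>\<^sub>0" using n by (intro not_nonpos_Ints_gt_minus_one) auto
  have Gamma_Suc: "Gamma (real (Suc n)) = n * Gamma n"
    using Gamma_plus1[OF n_Gamma] by (simp add: add.commute)
  have "Gamma n \<noteq> 0" using Gamma_nonzero[OF n_Gamma] .
  have "second_moment_step t = \<epsilon> + c * (const_C / c * (G / Gamma n) + e * n) / n"
    using n by (simp add: t second_moment_step_Suc second_moment_steps_sum_eq c_def G_def e_def)
  also have "\<dots> = const_C * G / (n * Gamma n) + (e * c + \<epsilon>)"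
    using n \<open>Gamma n \<noteq> 0\<close> \<open>c \<noteq> 0\<close> by (simp add: field_simps)
  also have "\<dots> = const_C * Gamma (real t - \<epsilon> - r) / Gamma (real t) + \<epsilon> / (\<epsilon> + r)"
    unfolding e_def c_def stop_fraction_eq t Gamma_Suc by (simp add: G_def algebra_simps)
  finally show ?thesis .
qed

context
  assumes gamma_range: "-1/2 < p - q" "2 * (p - q) \<noteq> 1" "2 * (p - q) \<noteq> 1 - \<epsilon> - r"
begin

lemma const_D_mult_Gamma:
  "const_D * Gamma (2 * (p - q) + 1) = - 2 * (p - q) *
    (\<epsilon> / ((\<epsilon> + r) * (1 - 2 * (p - q))) + r / ((\<epsilon> + r) * (1 - \<epsilon> - r - 2 * (p - q))))"
proof -
  define X where "X = \<epsilon> / ((\<epsilon> + r) * (1 - 2 * (p - q))) + r / ((\<epsilon> + r) * (1 - \<epsilon> - r - 2 * (p - q)))"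
  have "2 * (p - q) + 1 \<notin> \<int>\<^sub>\<le>\<^sub>0"
    using gamma_range by (intro not_nonpos_Ints_gt_minus_one) auto
  then have rGamma_Gamma: "rGamma (2 * (p - q)) * Gamma (2 * (p - q) + 1) = 2 * (p - q)"
    by (rule rGamma_mult_Gamma_plus1)
  have "const_D * Gamma (2 * (p - q) + 1) = - X * (rGamma (2 * (p - q)) * Gamma (2 * (p - q) + 1))"
    unfolding const_D_def X_def[symmetric] by (simp add: mult_ac)
  also have "\<dots> = - 2 * (p - q) * X"
    unfolding rGamma_Gamma by (simp add: algebra_simps)
  finally show ?thesis
    unfolding X_def .
qed

lemma second_moment_position_1_eq:
  "second_moment_position 1 = \<epsilon> / ((1 - 2 * (p - q)) * (\<epsilon> + r)) * real 1
    + const_C / (1 - \<epsilon> - r - 2 * (p - q)) * (Gamma (real 1 + 1 - \<epsilon> - r) / Gamma (real 1))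
    + const_D * (Gamma (real 1 + 2 * (p - q)) / Gamma (real 1))"
proof -
  define g d where "g = p - q" and "d = 1 - \<epsilon> - r - 2 * (p - q)"
  have nz: "1 - 2 * g \<noteq> 0" "d \<noteq> 0" "\<epsilon> + r \<noteq> 0"
    using gamma_range stop_rate_nonzero by (auto simp: g_def d_def)
  have D_Gamma: "const_D * Gamma (real 1 + 2 * g) = - 2 * g * (\<epsilon> / ((\<epsilon> + r) * (1 - 2 * g)) + r / ((\<epsilon> + r) * d))"
    using const_D_mult_Gamma by (simp add: g_def d_def add.commute)
  have "const_C * Gamma (real 1 + 1 - \<epsilon> - r) = (1 - \<epsilon> - r) * (const_C * Gamma (1 - \<epsilon> - r))"
    by (simp add: Gamma_two_minus_stop_rate)
  also have "\<dots> = r / (\<epsilon> + r) * (d + 2 * g)"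
    by (simp add: const_C_mult_Gamma d_def g_def)
  finally have C_Gamma: "const_C * Gamma (real 1 + 1 - \<epsilon> - r) = r / (\<epsilon> + r) * (d + 2 * g)" .
  have "\<epsilon> / ((1 - 2 * g) * (\<epsilon> + r)) * real 1 + const_C / d * (Gamma (real 1 + 1 - \<epsilon> - r) / Gamma (real 1))
      + const_D * (Gamma (real 1 + 2 * g) / Gamma (real 1))
    = \<epsilon> / ((1 - 2 * g) * (\<epsilon> + r)) + const_C * Gamma (real 1 + 1 - \<epsilon> - r) / d
      + const_D * Gamma (real 1 + 2 * g)"
    by simp
  also have "\<dots> = \<epsilon> / ((1 - 2 * g) * (\<epsilon> + r)) + r / (\<epsilon> + r) * (d + 2 * g) / d
      - 2 * g * (\<epsilon> / ((\<epsilon> + r) * (1 - 2 * g)) + r / ((\<epsilon> + r) * d))"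
    unfolding C_Gamma D_Gamma by simp
  also have "\<dots> = 1"
    using nz by (simp add: divide_simps) (simp add: algebra_simps)
  finally show ?thesis
    using second_moments_1 by (simp add: g_def d_def)
qed

lemma second_moment_position_eq:
  "0 < t \<Longrightarrow> second_moment_position t = \<epsilon> / ((1 - 2 * (p - q)) * (\<epsilon> + r)) * real t
    + const_C / (1 - \<epsilon> - r - 2 * (p - q)) * (Gamma (real t + 1 - \<epsilon> - r) / Gamma (real t))
    + const_D * (Gamma (real t + 2 * (p - q)) / Gamma (real t))"
proof (induction t rule: nat_induct_non_zero)
  case 1
  show ?case by (rule second_moment_position_1_eq)
next
  case (Suc n)
  define g c where "g = p - q" and "c = 1 - \<epsilon> - r"
  define \<alpha> \<beta> e K H1 H2 where "\<alpha> = \<epsilon> / ((1 - 2 * g) * (\<epsilon> + r))" and "\<beta> = const_C / (c - 2 * g)"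
    and "e = \<epsilon> / (\<epsilon> + r)" and "K = const_C / c"
    and "H1 = Gamma (real n + 1 - \<epsilon> - r) / Gamma n" and "H2 = Gamma (real n + 2 * g) / Gamma n"
  have ratio1: "Gamma (real (Suc n) + 1 - \<epsilon> - r) / Gamma (real (Suc n)) = (1 + c / n) * H1"
    using Gamma_stop_ratio_Suc[OF Suc.hyps] by (simp add: c_def H1_def)
  have "real n + 2 * g \<notin> \<int>\<^sub>\<le>\<^sub>0"
    using Suc.hyps gamma_range by (intro not_nonpos_Ints_gt_minus_one) (auto simp: g_def)
  then have ratio2: "Gamma (real (Suc n) + 2 * g) / Gamma (real (Suc n)) = (1 + 2 * g / n) * H2"
    using Gamma_ratio_Suc[OF Suc.hyps] by (simp add: H2_def)
  have nz: "c \<noteq> 0" "1 - 2 * g \<noteq> 0" "c - 2 * g \<noteq> 0" "\<epsilon> + r \<noteq> 0"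
    using gamma_range stop_rate_nonzero by (auto simp: c_def g_def)
  have "e * c + \<epsilon> = e"
    unfolding e_def c_def by (rule stop_fraction_eq)
  moreover have "2 * g * \<alpha> + e = \<alpha>"
    using nz by (simp add: \<alpha>_def e_def divide_simps) (simp add: algebra_simps)
  ultimately have \<alpha>: "2 * g * \<alpha> + (e * c + \<epsilon>) = \<alpha>" by simp
  have \<beta>: "2 * g * \<beta> + c * K = \<beta> * c"
    using nz by (simp add: \<beta>_def K_def divide_simps) (simp add: algebra_simps)
  have "second_moment_position (Suc n) =
      (1 + 2 * g / n) * (\<alpha> * n + \<beta> * H1 + const_D * H2) + c * (K * H1 + e * n) / n + \<epsilon>"
    using Suc by (simp add: second_moment_position_Suc second_moment_steps_sum_eq
        \<alpha>_def \<beta>_def e_def K_def H1_def H2_def g_def c_def)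
  also have "\<dots> = \<alpha> * n + (2 * g * \<alpha> + (e * c + \<epsilon>)) + (\<beta> + (2 * g * \<beta> + c * K) / n) * H1
      + const_D * ((1 + 2 * g / n) * H2)"
    using Suc.hyps by (simp add: field_simps)
  also have "\<dots> = \<alpha> * real (Suc n) + \<beta> * ((1 + c / n) * H1) + const_D * ((1 + 2 * g / n) * H2)"
    unfolding \<alpha> \<beta> using Suc.hyps by (simp add: field_simps)
  finally show ?case
    unfolding ratio1[symmetric] ratio2[symmetric] unfolding \<alpha>_def \<beta>_def g_def c_def .
qed

end

end

end

theorem mainTheorem11:
  fixes p q p' q' r \<epsilon> s1 s2 s3 s4 :: real
  assumes "p \<in> {0<..<1}" "q \<in> {0<..<1}" "p' \<in> {0<..<1}" "q' \<in> {0<..<1}" "r \<in> {0<..<1}"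
    and "p + q + p' + q' + r = 1"
    and "\<epsilon> \<in> {0<..<1}"
    and "s1 \<in> {0<..<1}" "s2 \<in> {0<..<1}" "s3 \<in> {0<..<1}" "s4 \<in> {0<..<1}"
    and "s1 + s2 + s3 + s4 = 1"
    and "\<epsilon> + r \<noteq> 1"
  shows
   "let \<gamma> = p - q;
        C = r / ((\<epsilon> + r) * Gamma (1 - \<epsilon> - r));
        D = - rGamma (2 * \<gamma>) *
              (\<epsilon> / ((\<epsilon> + r) * (1 - 2 * \<gamma>)) + r / ((\<epsilon> + r) * (1 - \<epsilon> - r - 2 * \<gamma>)));
        W = walk_path p q p' q' r \<epsilon> s1 s2 s3 s4
    in (\<forall>t::nat. t \<ge> 1 \<longrightarrow>
          measure_pmf.expectation (W t) (\<lambda>xs. (norm (xs ! (t - 1)))\<^sup>2)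
            = C * Gamma (real t - \<epsilon> - r) / Gamma (real t) + \<epsilon> / (\<epsilon> + r))
     \<and> ((-1/2 < \<gamma> \<and> \<gamma> < 1 \<and> \<gamma> \<noteq> 1/2 \<and> 2 * \<gamma> \<noteq> 1 - \<epsilon> - r) \<longrightarrow>
        (\<forall>t::nat. t \<ge> 1 \<longrightarrow>
          measure_pmf.expectation (W t) (\<lambda>xs. (norm (sum_list xs))\<^sup>2)
            = \<epsilon> / ((1 - 2 * \<gamma>) * (\<epsilon> + r)) * real t
              + C / (1 - \<epsilon> - r - 2 * \<gamma>) * (Gamma (real t + 1 - \<epsilon> - r) / Gamma (real t))
              + D * (Gamma (real t + 2 * \<gamma>) / Gamma (real t))))"
proof -
  interpret elephant_walk_with_stops p q p' q' r \<epsilon> s1 s2 s3 s4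
    using assms by unfold_locales auto
  have stop_rate: "0 < \<epsilon> + r" "\<epsilon> + r < 2" "\<epsilon> + r \<noteq> 1"
    using assms by auto
  have steps: "measure_pmf.expectation (walk t) (\<lambda>xs. (norm (xs ! (t - 1)))\<^sup>2)
      = const_C * Gamma (real t - \<epsilon> - r) / Gamma (real t) + \<epsilon> / (\<epsilon> + r)" if "t \<ge> 1" for t
    using second_moment_step_eq[OF stop_rate, of t] that by (simp add: second_moment_step_def)
  have position: "measure_pmf.expectation (walk t) (\<lambda>xs. (norm (sum_list xs))\<^sup>2)
      = \<epsilon> / ((1 - 2 * (p - q)) * (\<epsilon> + r)) * real t
        + const_C / (1 - \<epsilon> - r - 2 * (p - q)) * (Gamma (real t + 1 - \<epsilon> - r) / Gamma (real t))
        + const_D * (Gamma (real t + 2 * (p - q)) / Gamma (real t))"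
    if "-1/2 < p - q" "p - q \<noteq> 1/2" "2 * (p - q) \<noteq> 1 - \<epsilon> - r" "t \<ge> 1" for t
    using second_moment_position_eq[OF stop_rate, of t] that by (simp add: second_moment_position_def)
  show ?thesis
    unfolding Let_def const_C_def[symmetric] const_D_def[symmetric] using steps position by blast
qed

end
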